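(* Let $\mathcal R$ be a PTRS. If there exists an infinite sequence $(\mu_n)_{n\in\mathbb N}$ with $\mu_n\overset{\mathsf i}{\rightrightarrows}_{\mathcal R}\mu_{n+1}$ for all $n$ and $\lim_{n\to\infty}|\mu_n|_{\mathcal R}<1$, then there also exists an infinite sequence $(\mu'_n)_{n\in\mathbb N}$ with $\mu'_n\overset{\mathsf i}{\rightrightarrows}_{\mathcal R}\mu'_{n+1}$ for all $n$, $\mu'_0=\{1:t\}$ for some term $t$, and $\lim_{n\to\infty}|\mu'_n|_{\mathcal R}<1$.
   Context: Finite multi-distributions on a set $A$: finite multisets of pairs $(p:a)$, $0<p\le1$, with probabilities summing to $1$; $p\cdot\mu=\{(pq:a)\mid(q:a)\in\mu\}$. A PTRS is a finite set of rules $\ell\to\{p_1:r_1,\dots,p_k:r_k\}$ ($\ell$ non-variable, $\mathcal V(r_j)\subseteq\mathcal V(\ell)$). $s\overset{\mathsf i}{\to}_{\mathcal R}\{p_1:t_1,\dots,p_k:t_k\}$ if for a position $\pi$, rule and substitution $\sigma$: $s|_\pi=\ell\sigma$, every proper subterm of $\ell\sigma$ is in $\mathtt{NF}_{\mathcal R}$ (terms admitting no rewrite step), and $t_j=s[r_j\sigma]_\pi$. $\overset{\mathsf i}{\rightrightarrows}_{\mathcal R}$ is its lifting: the smallest relation on finite multi-distributions of terms with $\{1:t\}\rightrightarrows\{1:t\}$ for $t\in\mathtt{NF}_{\mathcal R}$, $\{1:t\}\rightrightarrows\mu$ if $t\overset{\mathsf i}{\to}_{\mathcal R}\mu$, and $\bigcup_jp_j\cdot\mu_j\rightrightarrows\bigcup_jp_j\cdot\nu_j$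 whenever $\mu_j\rightrightarrows\nu_j$, $p_j>0$, $\sum_jp_j=1$. $|\mu|_{\mathcal R}=\sum_{(p:t)\in\mu,\,t\in\mathtt{NF}_{\mathcal R}}p$. *)

theory Defs
  imports Complex_Main "HOL-Library.Multiset"
begin

datatype ('f, 'v) trm = Var 'v | Fun 'f "('f, 'v) trm list"

fun vars :: "('f, 'v) trm \<Rightarrow> 'v set" where
  "vars (Var x) = {x}"
| "vars (Fun f ts) = \<Union> (set (map vars ts))"

fun subst :: "('f, 'v) trm \<Rightarrow> ('v \<Rightarrow> ('f, 'v) trm) \<Rightarrow> ('f, 'v) trm" where
  "subst (Var x) \<sigma> = \<sigma> x"
| "subst (Fun f ts) \<sigma> = Fun f (map (\<lambda>t. subst t \<sigma>) ts)"

text \<open>One-hole contexts: a context C together with the term C[s] plays the role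
  of a position pi in s with s|pi and s[.]pi.\<close>
datatype ('f, 'v) ctxt = Hole | More 'f "('f, 'v) trm list" "('f, 'v) ctxt" "('f, 'v) trm list"

fun ctxt_apply :: "('f, 'v) ctxt \<Rightarrow> ('f, 'v) trm \<Rightarrow> ('f, 'v) trm" where
  "ctxt_apply Hole s = s"
| "ctxt_apply (More f ss1 C ss2) s = Fun f (ss1 @ ctxt_apply C s # ss2)"

inductive supteq :: "('f, 'v) trm \<Rightarrow> ('f, 'v) trm \<Rightarrow> bool" where
  refl: "supteq t t"
| arg: "u \<in> set ts \<Longrightarrow> supteq u v \<Longrightarrow> supteq (Fun f ts) v"

definition supt :: "('f, 'v) trm \<Rightarrow> ('f, 'v) trm \<Rightarrow> bool" where
  "supt s t \<longleftrightarrow> (\<exists>f ts u. s = Fun f ts \<and> u \<in> set ts \<and> supteq u t)"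

type_synonym 'a mdist = "(real \<times> 'a) multiset"

definition is_mdist :: "'a mdist \<Rightarrow> bool" where
  "is_mdist \<mu> \<longleftrightarrow> (\<forall>(p, a) \<in># \<mu>. 0 < p \<and> p \<le> 1) \<and> sum_mset (image_mset fst \<mu>) = 1"

definition scale_mdist :: "real \<Rightarrow> 'a mdist \<Rightarrow> 'a mdist" where
  "scale_mdist p \<mu> = image_mset (\<lambda>(q, a). (p * q, a)) \<mu>"

type_synonym ('f, 'v) prule = "('f, 'v) trm \<times> ('f, 'v) trm mdist"

definition is_PTRS :: "('f, 'v) prule set \<Rightarrow> bool" where
  "is_PTRS R \<longleftrightarrow> finite R \<and>
     (\<forall>(l, \<nu>) \<in> R. (\<exists>f ts. l = Fun f ts) \<and> is_mdist \<nu> \<and>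
        (\<forall>(p, r) \<in># \<nu>. vars r \<subseteq> vars l))"

definition NF :: "('f, 'v) prule set \<Rightarrow> ('f, 'v) trm set" where
  "NF R = {t. \<not> (\<exists>C l \<nu> \<sigma>. (l, \<nu>) \<in> R \<and> t = ctxt_apply C (subst l \<sigma>))}"

definition istep :: "('f, 'v) prule set \<Rightarrow> ('f, 'v) trm \<Rightarrow> ('f, 'v) trm mdist \<Rightarrow> bool" where
  "istep R s \<mu> \<longleftrightarrow> (\<exists>C l \<nu> \<sigma>. (l, \<nu>) \<in> R \<and> s = ctxt_apply C (subst l \<sigma>) \<and>
     (\<forall>u. supt (subst l \<sigma>) u \<longrightarrow> u \<in> NF R) \<and>
     \<mu> = image_mset (\<lambda>(p, r). (p, ctxt_apply C (subst r \<sigma>))) \<nu>)"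

text \<open>Lifting of innermost rewriting to multi-distributions. The third rule takes a
  finite family (a list) of triples (p_j, mu_j, nu_j).\<close>
inductive ilift :: "('f, 'v) prule set \<Rightarrow> ('f, 'v) trm mdist \<Rightarrow> ('f, 'v) trm mdist \<Rightarrow> bool"
  for R where
  nf: "t \<in> NF R \<Longrightarrow> ilift R {#(1, t)#} {#(1, t)#}"
| step: "istep R t \<mu> \<Longrightarrow> ilift R {#(1, t)#} \<mu>"
| comb: "(\<forall>(p, \<mu>, \<nu>) \<in> set xs. p > 0 \<and> ilift R \<mu> \<nu>) \<Longrightarrow> sum_list (map fst xs) = 1 \<Longrightarrow>
    ilift R (sum_list (map (\<lambda>(p, \<mu>, \<nu>). scale_mdist p \<mu>) xs))
            (sum_list (map (\<lambda>(p, \<mu>, \<nu>). scale_mdist p \<nu>) xs))"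

definition nf_prob :: "('f, 'v) prule set \<Rightarrow> ('f, 'v) trm mdist \<Rightarrow> real" where
  "nf_prob R \<mu> = sum_mset (image_mset fst (filter_mset (\<lambda>(p, t). t \<in> NF R) \<mu>))"

end

theory Submission imports Defs begin

text \<open>A lifted innermost step is a weighted sum of independent steps of single terms, so an
  infinite lifted chain starting from \<open>\<mu>\<^sub>0\<close> splits into one subchain per element \<open>(p:t)\<close> of
  \<open>\<mu>\<^sub>0\<close>, and the normal-form probabilities of the subchains add up.  These probabilities
  increase along each subchain and are bounded by its mass \<open>p\<close>.  As the limit for the whole
  chain is below its mass \<open>1\<close>, some subchain converges to less than its weight \<open>p\<close>; scaled by
  \<open>1/p\<close> it is a chain from \<open>{1:t}\<close> whose normal-form probability tends to a limit below \<open>1\<close>.\<close>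

definition mass :: "'a mdist \<Rightarrow> real" where
  "mass \<mu> = sum_mset (image_mset fst \<mu>)"

definition pos_weights :: "'a mdist \<Rightarrow> bool" where
  "pos_weights \<mu> \<longleftrightarrow> (\<forall>(p, a) \<in># \<mu>. 0 < p)"

definition point_step :: "('f, 'v) prule set \<Rightarrow> ('f, 'v) trm \<Rightarrow> ('f, 'v) trm mdist \<Rightarrow> bool" where
  "point_step R t \<nu> \<longleftrightarrow> (t \<in> NF R \<and> \<nu> = {#(1, t)#}) \<or> istep R t \<nu>"

definition step_sources :: "(real \<times> 'a \<times> 'b) multiset \<Rightarrow> 'a mdist" where
  "step_sources M = image_mset (\<lambda>(p, t, \<nu>). (p, t)) M"

definition step_targets :: "(real \<times> 'a \<times> 'c mdist) multiset \<Rightarrow> 'c mdist" where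
  "step_targets M = sum_mset (image_mset (\<lambda>(p, t, \<nu>). scale_mdist p \<nu>) M)"

text \<open>The lifting \<open>ilift\<close> without the requirement that the weights sum to \<open>1\<close>: a multiset
  \<open>M\<close> of weighted point steps \<open>(p, t, \<nu>)\<close> rewrites \<open>\<Sum> {p:t}\<close> to \<open>\<Sum> p\<cdot>\<nu>\<close>.  Unlike \<open>ilift\<close>, this
  relation is closed under scaling and under splitting of its left-hand side.\<close>
definition ilift_weighted :: "('f, 'v) prule set \<Rightarrow> ('f, 'v) trm mdist \<Rightarrow> ('f, 'v) trm mdist \<Rightarrow> bool" where
  "ilift_weighted R \<mu> \<nu> \<longleftrightarrow> (\<exists>M. (\<forall>(p, t, \<nu>') \<in># M. 0 < p \<and> point_step R t \<nu>') \<and>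
     \<mu> = step_sources M \<and> \<nu> = step_targets M)"

lemma scale_mdist_one [simp]: "scale_mdist 1 \<mu> = \<mu>"
  by (simp add: scale_mdist_def case_prod_beta)

lemma scale_mdist_scale_mdist [simp]: "scale_mdist c (scale_mdist q \<mu>) = scale_mdist (c * q) \<mu>"
  by (simp add: scale_mdist_def image_mset.compositionality o_def case_prod_beta mult.assoc split_def)

lemma scale_mdist_plus [simp]: "scale_mdist c (\<mu> + \<nu>) = scale_mdist c \<mu> + scale_mdist c \<nu>"
  by (simp add: scale_mdist_def)

lemma scale_mdist_empty [simp]: "scale_mdist c {#} = {#}"
  by (simp add: scale_mdist_def)

lemma scale_mdist_add_mset [simp]:
  "scale_mdist c (add_mset (q, t) \<mu>) = add_mset (c * q, t) (scale_mdist c \<mu>)"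
  by (simp add: scale_mdist_def)

lemma mass_empty [simp]: "mass {#} = 0"
  by (simp add: mass_def)

lemma mass_plus [simp]: "mass (\<mu> + \<nu>) = mass \<mu> + mass \<nu>"
  by (simp add: mass_def)

lemma mass_add_mset [simp]: "mass (add_mset x \<mu>) = fst x + mass \<mu>"
  by (simp add: mass_def)

lemma mass_scale_mdist [simp]: "mass (scale_mdist c \<mu>) = c * mass \<mu>"
  by (induction \<mu>) (auto simp: scale_mdist_def algebra_simps)

lemma nf_prob_empty [simp]: "nf_prob R {#} = 0"
  by (simp add: nf_prob_def)

lemma nf_prob_plus [simp]: "nf_prob R (\<mu> + \<nu>) = nf_prob R \<mu> + nf_prob R \<nu>"
  by (simp add: nf_prob_def)

lemma nf_prob_add_mset [simp]:
  "nf_prob R (add_mset (p, t) \<mu>) = (if t \<in> NF R then p else 0) + nf_prob R \<mu>"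
  by (simp add: nf_prob_def)

lemma nf_prob_scale_mdist [simp]: "nf_prob R (scale_mdist c \<mu>) = c * nf_prob R \<mu>"
proof (induction \<mu>)
  case (add x \<mu>)
  then show ?case by (cases x) (simp add: scale_mdist_def algebra_simps)
qed simp

lemma pos_weights_scale_mdist:
  "0 < c \<Longrightarrow> pos_weights \<mu> \<Longrightarrow> pos_weights (scale_mdist c \<mu>)"
  by (auto simp: pos_weights_def scale_mdist_def)

lemma nf_prob_nonneg: "pos_weights \<mu> \<Longrightarrow> 0 \<le> nf_prob R \<mu>"
  by (induction \<mu>) (auto simp: pos_weights_def)

lemma nf_prob_le_mass: "pos_weights \<mu> \<Longrightarrow> nf_prob R \<mu> \<le> mass \<mu>"
  by (induction \<mu>) (auto simp: pos_weights_def)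

lemma istep_not_NF: "istep R t \<nu> \<Longrightarrow> t \<notin> NF R"
  unfolding istep_def NF_def by blast

lemma istep_mdist:
  assumes "is_PTRS R" "istep R t \<nu>"
  shows "pos_weights \<nu>" "mass \<nu> = 1"
proof -
  obtain C l \<nu>\<^sub>R \<sigma> where rule: "(l, \<nu>\<^sub>R) \<in> R"
    and \<nu>: "\<nu> = image_mset (\<lambda>(p, r). (p, ctxt_apply C (subst r \<sigma>))) \<nu>\<^sub>R"
    using assms(2) unfolding istep_def by blast
  have "is_mdist \<nu>\<^sub>R"
    using assms(1) rule unfolding is_PTRS_def by blast
  moreover have "image_mset fst \<nu> = image_mset fst \<nu>\<^sub>R"
    unfolding \<nu> by (simp add: image_mset.compositionality o_def case_prod_beta)
  ultimately show "pos_weights \<nu>" "mass \<nu> = 1"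
    unfolding \<nu> pos_weights_def mass_def is_mdist_def by auto
qed

lemma point_step_props:
  assumes "is_PTRS R" "point_step R t \<nu>"
  shows "pos_weights \<nu> \<and> mass \<nu> = 1 \<and> nf_prob R {#(1, t)#} \<le> nf_prob R \<nu>"
  using assms(2) unfolding point_step_def
proof
  assume step: "istep R t \<nu>"
  then have "pos_weights \<nu>" "mass \<nu> = 1"
    using istep_mdist[OF assms(1)] by simp_all
  then show ?thesis
    using istep_not_NF[OF step] nf_prob_nonneg[of \<nu> R] by simp
qed (auto simp: pos_weights_def)

lemma step_sources_empty [simp]: "step_sources {#} = {#}"
  and step_sources_add_mset [simp]: "step_sources (add_mset (p, t, \<nu>) M) = add_mset (p, t) (step_sources M)"
  and step_sources_plus [simp]: "step_sources (M + N) = step_sources M + step_sources N"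
  by (simp_all add: step_sources_def)

lemma step_targets_empty [simp]: "step_targets {#} = {#}"
  and step_targets_add_mset [simp]: "step_targets (add_mset (p, t, \<nu>) M) = scale_mdist p \<nu> + step_targets M"
  and step_targets_plus [simp]: "step_targets (M + N) = step_targets M + step_targets N"
  by (simp_all add: step_targets_def)

lemma ilift_weighted_stepsI:
  "\<forall>(p, t, \<nu>) \<in># M. 0 < p \<and> point_step R t \<nu> \<Longrightarrow> ilift_weighted R (step_sources M) (step_targets M)"
  unfolding ilift_weighted_def by blast

lemma ilift_weighted_empty: "ilift_weighted R {#} {#}"
  unfolding ilift_weighted_def by (intro exI[of _ "{#}"]) simp

lemma ilift_weighted_point_step:
  "point_step R t \<nu> \<Longrightarrow> ilift_weighted R {#(1, t)#} \<nu>"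
  unfolding ilift_weighted_def by (intro exI[of _ "{#(1, t, \<nu>)#}"]) simp

lemma ilift_weighted_plus:
  assumes "ilift_weighted R \<mu>\<^sub>1 \<nu>\<^sub>1" "ilift_weighted R \<mu>\<^sub>2 \<nu>\<^sub>2"
  shows "ilift_weighted R (\<mu>\<^sub>1 + \<mu>\<^sub>2) (\<nu>\<^sub>1 + \<nu>\<^sub>2)"
proof -
  obtain M\<^sub>1 M\<^sub>2 where "\<forall>(p, t, \<nu>) \<in># M\<^sub>1. 0 < p \<and> point_step R t \<nu>" "\<mu>\<^sub>1 = step_sources M\<^sub>1" "\<nu>\<^sub>1 = step_targets M\<^sub>1"
    and "\<forall>(p, t, \<nu>) \<in># M\<^sub>2. 0 < p \<and> point_step R t \<nu>" "\<mu>\<^sub>2 = step_sources M\<^sub>2" "\<nu>\<^sub>2 = step_targets M\<^sub>2"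
    using assms unfolding ilift_weighted_def by blast
  then show ?thesis
    unfolding ilift_weighted_def by (intro exI[of _ "M\<^sub>1 + M\<^sub>2"]) auto
qed

lemma step_sources_scale:
  "step_sources (image_mset (\<lambda>(p, t, \<nu>). (c * p, t, \<nu>)) M) = scale_mdist c (step_sources M)"
  by (induction M) auto

lemma step_targets_scale:
  "step_targets (image_mset (\<lambda>(p, t, \<nu>). (c * p, t, \<nu>)) M) = scale_mdist c (step_targets M)"
  by (induction M) auto

lemma ilift_weighted_scale:
  assumes "ilift_weighted R \<mu> \<nu>" "0 < c"
  shows "ilift_weighted R (scale_mdist c \<mu>) (scale_mdist c \<nu>)"
proof -
  obtain M where M: "\<forall>(p, t, \<nu>) \<in># M. 0 < p \<and> point_step R t \<nu>" "\<mu> = step_sources M" "\<nu> = step_targets M"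
    using assms(1) unfolding ilift_weighted_def by blast
  have "\<forall>(p, t, \<nu>) \<in># image_mset (\<lambda>(p, t, \<nu>). (c * p, t, \<nu>)) M. 0 < p \<and> point_step R t \<nu>"
    using M(1) assms(2) by auto
  then show ?thesis
    unfolding ilift_weighted_def M(2,3) step_sources_scale[symmetric] step_targets_scale[symmetric]
    by blast
qed

lemma ilift_weighted_split:
  assumes "ilift_weighted R (\<mu>\<^sub>1 + \<mu>\<^sub>2) \<nu>"
  obtains \<nu>\<^sub>1 \<nu>\<^sub>2 where "\<nu> = \<nu>\<^sub>1 + \<nu>\<^sub>2" "ilift_weighted R \<mu>\<^sub>1 \<nu>\<^sub>1" "ilift_weighted R \<mu>\<^sub>2 \<nu>\<^sub>2"
proof -
  obtain M where M: "\<forall>(p, t, \<nu>) \<in># M. 0 < p \<and> point_step R t \<nu>" "\<mu>\<^sub>1 + \<mu>\<^sub>2 = step_sources M" "\<nu> = step_targets M"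
    using assms unfolding ilift_weighted_def by blast
  obtain M\<^sub>1 M\<^sub>2 where M\<^sub>12: "M = M\<^sub>1 + M\<^sub>2" "\<mu>\<^sub>1 = step_sources M\<^sub>1" "\<mu>\<^sub>2 = step_sources M\<^sub>2"
    using image_mset_eq_plusD[OF M(2)[unfolded step_sources_def, symmetric]]
    unfolding step_sources_def by blast
  show ?thesis
  proof (rule that)
    show "ilift_weighted R \<mu>\<^sub>1 (step_targets M\<^sub>1)" "ilift_weighted R \<mu>\<^sub>2 (step_targets M\<^sub>2)"
      using M(1) ilift_weighted_stepsI[of M\<^sub>1 R] ilift_weighted_stepsI[of M\<^sub>2 R] unfolding M\<^sub>12 by auto
  qed (simp add: M(3) M\<^sub>12)
qed

lemma ilift_weighted_props:
  assumes "is_PTRS R" "ilift_weighted R \<mu> \<nu>"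
  shows "pos_weights \<mu>" "pos_weights \<nu>" "mass \<nu> = mass \<mu>" "nf_prob R \<mu> \<le> nf_prob R \<nu>"
proof -
  obtain M where M: "\<forall>(p, t, \<nu>) \<in># M. 0 < p \<and> point_step R t \<nu>" "\<mu> = step_sources M" "\<nu> = step_targets M"
    using assms(2) unfolding ilift_weighted_def by blast
  from M(1) have "pos_weights (step_sources M) \<and> pos_weights (step_targets M) \<and>
      mass (step_targets M) = mass (step_sources M) \<and>
      nf_prob R (step_sources M) \<le> nf_prob R (step_targets M)"
  proof (induction M)
    case (add x M)
    obtain p t \<nu> where x: "x = (p, t, \<nu>)" by (cases x)
    with add.prems have "0 < p" "point_step R t \<nu>" by auto
    then have \<nu>: "pos_weights \<nu>" "mass \<nu> = 1" "nf_prob R {#(1, t)#} \<le> nf_prob R \<nu>"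
      using point_step_props[OF assms(1)] by simp_all
    have "nf_prob R {#(p, t)#} \<le> nf_prob R (scale_mdist p \<nu>)"
      using \<nu>(3) nf_prob_nonneg[OF \<nu>(1)] \<open>0 < p\<close> by (cases "t \<in> NF R") simp_all
    then show ?case
      using add \<nu>(1,2) \<open>0 < p\<close> pos_weights_scale_mdist[of p \<nu>] unfolding x
      by (auto simp: pos_weights_def)
  qed (simp add: pos_weights_def)
  then show "pos_weights \<mu>" "pos_weights \<nu>" "mass \<nu> = mass \<mu>" "nf_prob R \<mu> \<le> nf_prob R \<nu>"
    using M(2,3) by auto
qed

lemma ilift_imp_ilift_weighted:
  assumes "ilift R \<mu> \<nu>"
  shows "ilift_weighted R \<mu> \<nu>"
  using assms
proof (induction rule: ilift.induct)
  case (nf t)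
  then show ?case by (intro ilift_weighted_point_step) (simp add: point_step_def)
next
  case (step t \<mu>)
  then show ?case by (intro ilift_weighted_point_step) (simp add: point_step_def)
next
  case (comb xs)
  from comb(1) show ?case
    by (induction xs) (auto intro!: ilift_weighted_empty ilift_weighted_plus ilift_weighted_scale)
qed

lemma ilift_mass: "ilift R \<mu> \<nu> \<Longrightarrow> mass \<mu> = 1"
proof (induction rule: ilift.induct)
  case (comb xs)
  have "mass (\<Sum>(p, \<mu>, \<nu>) \<leftarrow> xs. scale_mdist p \<mu>) = sum_list (map fst xs)"
    using comb(1) by (induction xs) auto
  with comb(2) show ?case
    by simp
qed auto

lemma ilift_weighted_imp_ilift:
  assumes "ilift_weighted R \<mu> \<nu>" "mass \<mu> = 1"
  shows "ilift R \<mu> \<nu>"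
proof -
  obtain M where M: "\<forall>(p, t, \<nu>) \<in># M. 0 < p \<and> point_step R t \<nu>" "\<mu> = step_sources M" "\<nu> = step_targets M"
    using assms(1) unfolding ilift_weighted_def by blast
  obtain xs where xs: "mset xs = M"
    using ex_mset by blast
  define ys where "ys = map (\<lambda>(p, t, \<nu>). (p, {#(1::real, t)#}, \<nu>)) xs"
  have "\<forall>(p, \<mu>, \<nu>) \<in> set ys. 0 < p \<and> ilift R \<mu> \<nu>"
    using M(1) unfolding ys_def xs[symmetric]
    by (auto simp: point_step_def intro: ilift.intros)
  moreover have "sum_list (map fst ys) = mass \<mu>"
    unfolding ys_def M(2) xs[symmetric] by (induction xs) auto
  ultimately have "ilift R (\<Sum>(p, \<mu>, \<nu>) \<leftarrow> ys. scale_mdist p \<mu>) (\<Sum>(p, \<mu>, \<nu>) \<leftarrow> ys. scale_mdist p \<nu>)"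
    using assms(2) by (intro ilift.comb) auto
  moreover have "(\<Sum>(p, \<mu>, \<nu>) \<leftarrow> ys. scale_mdist p \<mu>) = \<mu>" "(\<Sum>(p, \<mu>, \<nu>) \<leftarrow> ys. scale_mdist p \<nu>) = \<nu>"
    unfolding ys_def M(2,3) xs[symmetric] by (induction xs) auto
  ultimately show ?thesis
    by simp
qed

lemma ilift_weighted_chain_split:
  assumes "\<forall>n. ilift_weighted R (c n) (c (Suc n))" "c 0 = \<mu>\<^sub>1 + \<mu>\<^sub>2"
  obtains c\<^sub>1 c\<^sub>2 where "c\<^sub>1 0 = \<mu>\<^sub>1" "c\<^sub>2 0 = \<mu>\<^sub>2" "\<And>n. c n = c\<^sub>1 n + c\<^sub>2 n"
    "\<forall>n. ilift_weighted R (c\<^sub>1 n) (c\<^sub>1 (Suc n))" "\<forall>n. ilift_weighted R (c\<^sub>2 n) (c\<^sub>2 (Suc n))"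
proof -
  let ?P = "\<lambda>n (\<mu>\<^sub>1', \<mu>\<^sub>2'). c n = \<mu>\<^sub>1' + \<mu>\<^sub>2' \<and> (n = 0 \<longrightarrow> \<mu>\<^sub>1' = \<mu>\<^sub>1 \<and> \<mu>\<^sub>2' = \<mu>\<^sub>2)"
  let ?Q = "\<lambda>n (\<mu>\<^sub>1', \<mu>\<^sub>2') (\<nu>\<^sub>1, \<nu>\<^sub>2). ilift_weighted R \<mu>\<^sub>1' \<nu>\<^sub>1 \<and> ilift_weighted R \<mu>\<^sub>2' \<nu>\<^sub>2"
  have "\<exists>s. \<forall>n. ?P n (s n) \<and> ?Q n (s n) (s (Suc n))"
  proof (rule dependent_nat_choice)
    show "\<exists>x. ?P 0 x"
      using assms(2) by auto
  next
    fix x n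
    assume "?P n x"
    then obtain \<mu>\<^sub>1' \<mu>\<^sub>2' where "x = (\<mu>\<^sub>1', \<mu>\<^sub>2')" "c n = \<mu>\<^sub>1' + \<mu>\<^sub>2'"
      by (cases x) auto
    moreover from this(2) have "ilift_weighted R (\<mu>\<^sub>1' + \<mu>\<^sub>2') (c (Suc n))"
      using assms(1) by metis
    ultimately show "\<exists>y. ?P (Suc n) y \<and> ?Q n x y"
      by (elim ilift_weighted_split) auto
  qed
  then obtain s where "\<forall>n. ?P n (s n) \<and> ?Q n (s n) (s (Suc n))" ..
  then show ?thesis
    by (intro that[of "fst \<circ> s" "snd \<circ> s"]) (auto simp: case_prod_beta)
qed

lemma ilift_weighted_chain_mass:
  assumes "is_PTRS R" "\<forall>n. ilift_weighted R (c n) (c (Suc n))"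
  shows "mass (c n) = mass (c 0)"
proof (induction n)
  case (Suc n)
  then show ?case
    using ilift_weighted_props(3)[OF assms(1) assms(2)[rule_format, of n]] by simp
qed simp

lemma nf_prob_chain_convergent:
  assumes "is_PTRS R" "\<forall>n. ilift_weighted R (c n) (c (Suc n))"
  obtains L where "(\<lambda>n. nf_prob R (c n)) \<longlonglongrightarrow> L" "0 \<le> L" "L \<le> mass (c 0)"
proof -
  have bounds: "0 \<le> nf_prob R (c n)" "nf_prob R (c n) \<le> mass (c 0)" for n
    using ilift_weighted_props(1)[OF assms(1) assms(2)[rule_format, of n]]
      nf_prob_nonneg nf_prob_le_mass ilift_weighted_chain_mass[OF assms] by metis+
  have "incseq (\<lambda>n. nf_prob R (c n))"
    using ilift_weighted_props(4)[OF assms(1)] assms(2) by (intro incseq_SucI) auto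
  then obtain L where L: "(\<lambda>n. nf_prob R (c n)) \<longlonglongrightarrow> L"
    using incseq_convergent bounds(2) by blast
  moreover have "0 \<le> L" "L \<le> mass (c 0)"
    using LIMSEQ_le_const[OF L] LIMSEQ_le_const2[OF L] bounds by auto
  ultimately show ?thesis
    using that by blast
qed

lemma ilift_weighted_chain_deficit_point:
  assumes "is_PTRS R" "\<forall>n. ilift_weighted R (c n) (c (Suc n))"
    and "(\<lambda>n. nf_prob R (c n)) \<longlonglongrightarrow> L" "L < mass (c 0)"
  obtains p t c' L' where "(p, t) \<in># c 0" "c' 0 = {#(p, t)#}" "\<forall>n. ilift_weighted R (c' n) (c' (Suc n))"
    "(\<lambda>n. nf_prob R (c' n)) \<longlonglongrightarrow> L'" "L' < p"
  using assms(2-)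
proof (induction "c 0" arbitrary: c L thesis)
  case empty
  obtain L' where "(\<lambda>n. nf_prob R (c n)) \<longlonglongrightarrow> L'" "0 \<le> L'"
    using nf_prob_chain_convergent[OF assms(1) empty.prems(2)] by blast
  with empty LIMSEQ_unique show ?case
    by (metis mass_empty not_le)
next
  case (add x \<mu>)
  obtain p t where x: "x = (p, t)" by (cases x)
  obtain c\<^sub>1 c\<^sub>2 where c: "c\<^sub>1 0 = {#(p, t)#}" "c\<^sub>2 0 = \<mu>" "\<And>n. c n = c\<^sub>1 n + c\<^sub>2 n"
    and chain\<^sub>1: "\<forall>n. ilift_weighted R (c\<^sub>1 n) (c\<^sub>1 (Suc n))"
    and chain\<^sub>2: "\<forall>n. ilift_weighted R (c\<^sub>2 n) (c\<^sub>2 (Suc n))"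
    using ilift_weighted_chain_split[OF add.prems(2), of "{#(p, t)#}" \<mu>] add.hyps(2) x by auto
  obtain L\<^sub>1 where L\<^sub>1: "(\<lambda>n. nf_prob R (c\<^sub>1 n)) \<longlonglongrightarrow> L\<^sub>1"
    using nf_prob_chain_convergent[OF assms(1) chain\<^sub>1] by blast
  obtain L\<^sub>2 where L\<^sub>2: "(\<lambda>n. nf_prob R (c\<^sub>2 n)) \<longlonglongrightarrow> L\<^sub>2"
    using nf_prob_chain_convergent[OF assms(1) chain\<^sub>2] by blast
  have "L = L\<^sub>1 + L\<^sub>2"
    using LIMSEQ_unique[OF add.prems(3)] tendsto_add[OF L\<^sub>1 L\<^sub>2] by (simp add: c(3))
  moreover have "L < p + mass \<mu>"
    using add.prems(4) unfolding add.hyps(2)[symmetric] x by simp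
  ultimately consider "L\<^sub>1 < p" | "L\<^sub>2 < mass \<mu>"
    by linarith
  then show ?case
  proof cases
    case 1
    have "(p, t) \<in># c 0"
      unfolding add.hyps(2)[symmetric] x by simp
    from add.prems(1)[OF this c(1) chain\<^sub>1 L\<^sub>1 1] show ?thesis .
  next
    case 2
    show ?thesis
    proof (rule add.hyps(1)[OF c(2)[symmetric] _ chain\<^sub>2 L\<^sub>2])
      show "mass (c\<^sub>2 0) > L\<^sub>2"
        using 2 c(2) by simp
    qed (rule add.prems(1), simp_all add: c(2) add.hyps(2)[symmetric])
  qed
qed

theorem mainTheorem11:
  fixes R :: "('f, 'v) prule set" and \<mu> :: "nat \<Rightarrow> ('f, 'v) trm mdist"
  assumes "is_PTRS R"
    and "\<forall>n. ilift R (\<mu> n) (\<mu> (Suc n))"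
    and "\<exists>L. (\<lambda>n. nf_prob R (\<mu> n)) \<longlonglongrightarrow> L \<and> L < 1"
  shows "\<exists>\<mu>' :: nat \<Rightarrow> ('f, 'v) trm mdist.
           (\<forall>n. ilift R (\<mu>' n) (\<mu>' (Suc n))) \<and>
           (\<exists>t. \<mu>' 0 = {#(1, t)#}) \<and>
           (\<exists>L. (\<lambda>n. nf_prob R (\<mu>' n)) \<longlonglongrightarrow> L \<and> L < 1)"
proof -
  have chain: "\<forall>n. ilift_weighted R (\<mu> n) (\<mu> (Suc n))"
    using assms(2) ilift_imp_ilift_weighted by blast
  have "mass (\<mu> 0) = 1"
    using assms(2) ilift_mass by blast
  then obtain p t c L where "(p, t) \<in># \<mu> 0" "c 0 = {#(p, t)#}"
    and chain_c: "\<forall>n. ilift_weighted R (c n) (c (Suc n))"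
    and L: "(\<lambda>n. nf_prob R (c n)) \<longlonglongrightarrow> L" "L < p"
    using ilift_weighted_chain_deficit_point[OF assms(1) chain] assms(3) by (metis (no_types))
  moreover have "pos_weights (\<mu> 0)"
    using ilift_weighted_props(1)[OF assms(1)] chain by blast
  ultimately have p: "0 < p" and mass_c: "\<And>n. mass (c n) = p"
    using ilift_weighted_chain_mass[OF assms(1) chain_c] by (auto simp: pos_weights_def)
  define \<mu>' where "\<mu>' n = scale_mdist (1 / p) (c n)" for n
  have "ilift R (\<mu>' n) (\<mu>' (Suc n))" for n
    using p mass_c chain_c unfolding \<mu>'_def
    by (intro ilift_weighted_imp_ilift ilift_weighted_scale) auto
  moreover have "\<mu>' 0 = {#(1, t)#}"
    using p \<open>c 0 = {#(p, t)#}\<close> by (simp add: \<mu>'_def)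
  moreover have "(\<lambda>n. nf_prob R (\<mu>' n)) \<longlonglongrightarrow> L / p" "L / p < 1"
    using tendsto_divide[OF L(1) tendsto_const[of p]] L(2) p by (simp_all add: \<mu>'_def)
  ultimately show ?thesis
    by blast
qed

end
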